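(* For all real numbers $a,b,c>0$ (note $ab^2+bc^2+ca^2-abc>0$ for such $a,b,c$), \[ \frac{(a^4+b^4+c^4)^{3/2}}{\sqrt{ab^2+bc^2+ca^2-abc}\,\sqrt{a+b+c}} \leq \frac{a^5}{\sqrt{ca+b^2}} + \frac{b^5}{\sqrt{ab+c^2}} + \frac{c^5}{\sqrt{bc+a^2}}. \] *)

theory Defs
  imports Complex_Main
begin

end

theory Submission
  imports Defs
begin

text \<open>This is Hoelder's inequality
  \<open>(\<Sum> x\<^sup>4)\<^sup>3 \<le> (\<Sum> x\<^sup>5/q)\<^sup>2 (\<Sum> x\<^sup>2 q\<^sup>2)\<close> with \<open>q = sqrt(ca + b\<^sup>2)\<close> etc.,
  combined with the identity
  \<open>a\<^sup>2(ca + b\<^sup>2) + b\<^sup>2(ab + c\<^sup>2) + c\<^sup>2(bc + a\<^sup>2) = (ab\<^sup>2 + bc\<^sup>2 + ca\<^sup>2 - abc)(a + b + c)\<close>.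
  Hoelder is obtained by summing the tangent-line bound
  \<open>1/u \<ge> 3/(2s) - u\<^sup>2/(2s\<^sup>3)\<close> with weights \<open>w = x\<^sup>4\<close>, \<open>u = q/x\<close>, at the point
  \<open>s\<^sup>2 = (\<Sum> w u\<^sup>2) / (\<Sum> w)\<close>, where the summed right-hand side equals \<open>(\<Sum> w) / s\<close>.\<close>

lemma inverse_ge_tangent:
  fixes u s :: real
  assumes "u > 0" "s > 0"
  shows "3 / (2*s) - u^2 / (2*s^3) \<le> 1 / u"
proof -
  have "0 \<le> (s - u)^2 * (2*s + u)"
    using assms by simp
  then have "3*s^2*u - u^3 \<le> 2*s^3"
    by (simp add: power2_eq_square power3_eq_cube algebra_simps)
  then show ?thesis
    using assms by (simp add: field_simps power2_eq_square power3_eq_cube)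
qed

lemma sum_powr_three_halves_le_sum_divide:
  fixes w u :: "'i \<Rightarrow> real"
  assumes "finite I" and w: "\<And>i. i \<in> I \<Longrightarrow> w i > 0" and u: "\<And>i. i \<in> I \<Longrightarrow> u i > 0"
  shows "(\<Sum>i\<in>I. w i) powr (3/2) / sqrt (\<Sum>i\<in>I. w i * (u i)^2) \<le> (\<Sum>i\<in>I. w i / u i)"
proof (cases "I = {}")
  case False
  define S where "S = (\<Sum>i\<in>I. w i)"
  define T where "T = (\<Sum>i\<in>I. w i * (u i)^2)"
  have "S > 0" "T > 0"
    using False assms by (auto simp: S_def T_def intro!: sum_pos mult_pos_pos dest: u)
  define s where "s = sqrt (T / S)"
  have "s > 0"
    using \<open>S > 0\<close> \<open>T > 0\<close> by (simp add: s_def)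
  have T_eq: "T = S * s^2"
    using \<open>S > 0\<close> \<open>T > 0\<close> by (simp add: s_def)
  have "S powr (3/2) = S * sqrt S"
    using powr_add[of S 1 "1/2"] \<open>S > 0\<close> by (simp add: powr_half_sqrt)
  then have "S powr (3/2) / sqrt T = S / s"
    using \<open>S > 0\<close> \<open>T > 0\<close> by (simp add: s_def real_sqrt_divide powr_half_sqrt)
  also have "\<dots> = 3 / (2*s) * S - T / (2*s^3)"
    using \<open>s > 0\<close> by (simp add: T_eq field_simps power3_eq_cube power2_eq_square)
  also have "\<dots> = (\<Sum>i\<in>I. w i * (3 / (2*s) - (u i)^2 / (2*s^3)))"
    by (simp add: S_def T_def right_diff_distrib sum_subtractf sum_distrib_right
        sum_divide_distrib mult.commute)
  also have "\<dots> \<le> (\<Sum>i\<in>I. w i * (1 / u i))"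
    using w u \<open>s > 0\<close>
    by (intro sum_mono mult_left_mono inverse_ge_tangent) (simp_all add: less_imp_le)
  finally show ?thesis
    by (simp add: S_def T_def)
qed simp

lemma cyclic_sum_factorization:
  fixes a b c :: real
  shows "a^2*(c*a + b^2) + b^2*(a*b + c^2) + c^2*(b*c + a^2)
           = (a*b^2 + b*c^2 + c*a^2 - a*b*c) * (a + b + c)"
  by (simp add: algebra_simps power2_eq_square)

theorem mainTheorem7:
  fixes a b c :: real
  assumes "a > 0" and "b > 0" and "c > 0"
  shows "(a^4 + b^4 + c^4) powr (3/2)
           / (sqrt (a*b^2 + b*c^2 + c*a^2 - a*b*c) * sqrt (a + b + c))
         \<le> a^5 / sqrt (c*a + b^2) + b^5 / sqrt (a*b + c^2) + c^5 / sqrt (b*c + a^2)"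
proof -
  define x where "x = (\<lambda>i::nat. [a, b, c] ! i)"
  define q where "q = (\<lambda>i::nat. [c*a + b^2, a*b + c^2, b*c + a^2] ! i)"
  define I where "I = {0, 1, 2 :: nat}"
  have x: "x i > 0" and q: "q i > 0" if "i \<in> I" for i
    using that assms by (auto simp: I_def x_def q_def intro!: add_pos_pos)
  then have u: "sqrt (q i) / x i > 0" if "i \<in> I" for i
    using that by simp
  have "finite I"
    by (simp add: I_def)
  then have "(\<Sum>i\<in>I. x i ^ 4) powr (3/2) / sqrt (\<Sum>i\<in>I. x i ^ 4 * (sqrt (q i) / x i)^2)
          \<le> (\<Sum>i\<in>I. x i ^ 4 / (sqrt (q i) / x i))"
    using x u by (intro sum_powr_three_halves_le_sum_divide) (blast intro: zero_less_power)+
  also have "(\<Sum>i\<in>I. x i ^ 4 / (sqrt (q i) / x i)) = (\<Sum>i\<in>I. x i ^ 5 / sqrt (q i))"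
    using x by (intro sum.cong) (simp_all add: field_simps eval_nat_numeral)
  also have "(\<Sum>i\<in>I. x i ^ 4 * (sqrt (q i) / x i)^2) = (\<Sum>i\<in>I. x i ^ 2 * q i)"
  proof (rule sum.cong)
    fix i assume "i \<in> I"
    with x q show "x i ^ 4 * (sqrt (q i) / x i)^2 = x i ^ 2 * q i"
      by (simp add: power_divide field_simps eval_nat_numeral less_imp_le)
  qed simp
  finally have "(\<Sum>i\<in>I. x i ^ 4) powr (3/2) / sqrt (\<Sum>i\<in>I. x i ^ 2 * q i)
                  \<le> (\<Sum>i\<in>I. x i ^ 5 / sqrt (q i))" .
  moreover have "sqrt (a*b^2 + b*c^2 + c*a^2 - a*b*c) * sqrt (a + b + c)
      = sqrt (a^2*(c*a + b^2) + b^2*(a*b + c^2) + c^2*(b*c + a^2))"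
    by (simp only: cyclic_sum_factorization real_sqrt_mult)
  ultimately show ?thesis
    by (simp add: I_def x_def q_def add.assoc)
qed

end
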